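(* Let $\Omega\subset\mathbb{R}^n$ be a bounded Lipschitz domain, $T>0$, $\Omega_T=(0,T]\times\Omega$, $W$ a Hilbert space of measurable functions on $\Omega_T$ continuously embedded in $L^2(0,T;L^2(\Omega))$, $y_0\in L^2(\Omega)$, and $S:L^2(0,T;\mathbb{R}^2)\to W$ a continuous affine map with $\|S(u)\|_W\le C(\|u\|_{L^2(0,T;\mathbb{R}^2)}+\|y_0\|_{L^2(\Omega)})$ for a constant $C$ independent of $u,y_0$; let $S_0$ be its linear part (the map $S$ with $y_0=0$) and $\|S_0\|$ its operator norm from $L^2(0,T;\mathbb{R}^2)$ to $L^2(0,T;L^2(\omega_{\mathrm{obs}}))$, where $\omega_{\mathrm{obs}}\subset\Omega$. Let $y^d\in L^2(0,T;L^2(\omega_{\mathrm{obs}}))$, $\alpha>0$, $\varepsilon>0$, $\mathcal{U}=H^1(0,T;\mathbb{R}^2)$, and $\beta>\|S_0\|^2+\alpha+\pi^2$. Let $\bar u\in\mathcal{U}$ be a local minimizer over $\mathcal{U}$ of $$J_\beta(u)=\frac12\|Su-y^d\|^2_{L^2(0,T;L^2(\omega_{\mathrm{obs}}))}+\frac\alpha2\|u\|^2_{L^2(0,T;\mathbb{R}^2)}+\frac\varepsilon2\|u_t\|^2_{L^2(0,T;\mathbb{R}^2)}+\beta\int_0^T|u_1(t)u_2(t)|\,dt.$$ Then $\bar u_1(t)\bar u_2(t)=0$ for all $t\in[0,T]$ apart from intervals of length at most $\sqrt\varepsilon$; i.e. every interval contained in $\{t\in[0,T]:\bar u_1(t)\bar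 u_2(t)\neq0\}$ has length at most $\sqrt{\varepsilon}$.
   Context: $Su=S(u)$ is the state for control $u=(u_1,u_2)$, restricted to $(0,T)\times\omega_{\mathrm{obs}}$ in the tracking term. Elements of $H^1(0,T;\mathbb{R}^2)$ are identified with their continuous representatives. *)

theory Defs
  imports "HOL-Analysis.Analysis"
begin

text \<open>Controls u = (u1,u2) are functions real => real * real, considered on [0,T].
  The Euclidean norm of a pair is the product norm.\<close>

definition ctrl_L2 :: "real \<Rightarrow> (real \<Rightarrow> real \<times> real) \<Rightarrow> bool" where
  "ctrl_L2 T u \<longleftrightarrow> set_borel_measurable lborel {0..T} u \<and>
     set_integrable lborel {0..T} (\<lambda>t. (norm (u t))^2)"

definition ctrl_nsq :: "real \<Rightarrow> (real \<Rightarrow> real \<times> real) \<Rightarrow> real" where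
  "ctrl_nsq T u = (LINT t:{0..T}|lborel. (norm (u t))^2)"

definition weak_deriv :: "real \<Rightarrow> (real \<Rightarrow> real \<times> real) \<Rightarrow> (real \<Rightarrow> real \<times> real) \<Rightarrow> bool" where
  "weak_deriv T u g \<longleftrightarrow> ctrl_L2 T g \<and>
     (\<forall>t\<in>{0..T}. u t = u 0 + (LINT s:{0..t}|lborel. g s))"

text \<open>H^1(0,T;R^2), elements identified with their continuous representatives.\<close>
definition H1 :: "real \<Rightarrow> (real \<Rightarrow> real \<times> real) \<Rightarrow> bool" where
  "H1 T u \<longleftrightarrow> ctrl_L2 T u \<and> continuous_on {0..T} u \<and> (\<exists>g. weak_deriv T u g)"

definition dt :: "real \<Rightarrow> (real \<Rightarrow> real \<times> real) \<Rightarrow> (real \<Rightarrow> real \<times> real)" where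
  "dt T u = (SOME g. weak_deriv T u g)"

definition H1_nsq :: "real \<Rightarrow> (real \<Rightarrow> real \<times> real) \<Rightarrow> real" where
  "H1_nsq T u = ctrl_nsq T u + ctrl_nsq T (dt T u)"

definition obs_L2 :: "real \<Rightarrow> 'a::euclidean_space set \<Rightarrow> (real \<times> 'a \<Rightarrow> real) \<Rightarrow> bool" where
  "obs_L2 T \<omega> y \<longleftrightarrow> set_borel_measurable lborel ({0<..<T} \<times> \<omega>) y \<and>
     set_integrable lborel ({0<..<T} \<times> \<omega>) (\<lambda>z. (y z)^2)"

definition obs_nsq :: "real \<Rightarrow> 'a::euclidean_space set \<Rightarrow> (real \<times> 'a \<Rightarrow> real) \<Rightarrow> real" where
  "obs_nsq T \<omega> y = (LINT z:({0<..<T} \<times> \<omega>)|lborel. (y z)^2)"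

definition lin_part :: "((real \<Rightarrow> real \<times> real) \<Rightarrow> (real \<times> 'a \<Rightarrow> real)) \<Rightarrow>
     (real \<Rightarrow> real \<times> real) \<Rightarrow> (real \<times> 'a \<Rightarrow> real)" where
  "lin_part S u = (\<lambda>z. S u z - S (\<lambda>_. 0) z)"

definition op_norm :: "real \<Rightarrow> 'a::euclidean_space set \<Rightarrow>
     ((real \<Rightarrow> real \<times> real) \<Rightarrow> (real \<times> 'a \<Rightarrow> real)) \<Rightarrow> real" where
  "op_norm T \<omega> S0 = (SUP u\<in>{u. ctrl_L2 T u \<and> ctrl_nsq T u \<noteq> 0}.
      sqrt (obs_nsq T \<omega> (S0 u)) / sqrt (ctrl_nsq T u))"

definition J_beta :: "real \<Rightarrow> 'a::euclidean_space set \<Rightarrow>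
     ((real \<Rightarrow> real \<times> real) \<Rightarrow> (real \<times> 'a \<Rightarrow> real)) \<Rightarrow> (real \<times> 'a \<Rightarrow> real) \<Rightarrow>
     real \<Rightarrow> real \<Rightarrow> real \<Rightarrow> (real \<Rightarrow> real \<times> real) \<Rightarrow> real" where
  "J_beta T \<omega> S yd \<alpha> \<epsilon> \<beta> u =
     1/2 * obs_nsq T \<omega> (\<lambda>z. S u z - yd z)
     + \<alpha>/2 * ctrl_nsq T u
     + \<epsilon>/2 * ctrl_nsq T (dt T u)
     + \<beta> * (LINT t:{0..T}|lborel. \<bar>fst (u t) * snd (u t)\<bar>)"

end

theory Submission
  imports Defs
begin

text \<open>Suppose \<open>ubar\<^sub>1 ubar\<^sub>2 \<noteq> 0\<close> on an interval longer than \<open>L = \<surd>\<epsilon>\<close>. On a window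
  \<open>[c, c + L]\<close> inside it the product has a constant sign \<open>\<sigma>\<close>; perturb \<open>ubar\<close> in the direction
  \<open>h(t) = sin (\<pi> (t - c) / L) (1, -\<sigma>)\<close>, extended by zero. For small \<open>s\<close> the products
  \<open>(ubar\<^sub>1 \<plusminus> s h\<^sub>1) (ubar\<^sub>2 \<plusminus> s h\<^sub>2)\<close> keep the sign \<open>\<sigma>\<close>, so the nonsmooth penalty is
  quadratic along \<open>h\<close> and its second difference is \<open>-2 s\<^sup>2 \<integral> sin\<^sup>2 = -s\<^sup>2 L\<close>. The second
  difference of the smooth part of \<open>J\<^sub>\<beta>\<close> is at most
  \<open>s\<^sup>2 (\<parallel>S\<^sub>0\<parallel>\<^sup>2 + \<alpha>) \<parallel>h\<parallel>\<^sup>2 + \<epsilon> s\<^sup>2 \<parallel>h'\<parallel>\<^sup>2 = s\<^sup>2 L (\<parallel>S\<^sub>0\<parallel>\<^sup>2 + \<alpha> + \<pi>\<^sup>2)\<close>, because \<open>\<epsilon> = L\<^sup>2\<close>.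
  As \<open>\<beta> > \<parallel>S\<^sub>0\<parallel>\<^sup>2 + \<alpha> + \<pi>\<^sup>2\<close>, one of \<open>J\<^sub>\<beta>(ubar \<plusminus> s h)\<close> lies below \<open>J\<^sub>\<beta>(ubar)\<close>, contradicting
  local minimality.\<close>

section \<open>Square-integrable controls\<close>

lemma ctrl_L2_set_integrable:
  assumes "ctrl_L2 T g"
  shows "set_integrable lborel {0..T} g"
proof (rule set_integrable_bound)
  have "set_integrable lborel {0..T} (\<lambda>_. 1::real)"
    unfolding set_integrable_def by (rule borel_integrable_compact) auto
  then show "set_integrable lborel {0..T} (\<lambda>t. 1 + (norm (g t))^2)"
    using assms unfolding ctrl_L2_def by (intro set_integral_add(1)) auto
  show "set_borel_measurable lborel {0..T} g"
    using assms unfolding ctrl_L2_def by blast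
  have "norm (g t) \<le> 1 + (norm (g t))^2" for t
  proof -
    have "2 * norm (g t) \<le> (norm (g t))^2 + 1"
      using zero_le_power2[of "norm (g t) - 1"] by (simp add: power2_diff)
    then show ?thesis using norm_ge_zero[of "g t"] by linarith
  qed
  then show "AE t in lborel. t \<in> {0..T} \<longrightarrow> norm (g t) \<le> norm (1 + (norm (g t))^2)"
    by auto
qed

lemma norm_add_scaleR_sq_le:
  fixes x y :: "'a::real_normed_vector"
  shows "(norm (x + c *\<^sub>R y))^2 \<le> 2 * (norm x)^2 + (2 * c^2) * (norm y)^2"
proof -
  have "(norm (x + c *\<^sub>R y))^2 \<le> (norm x + \<bar>c\<bar> * norm y)^2"
    using norm_triangle_ineq[of x "c *\<^sub>R y"] by (simp add: power_mono)
  also have "\<dots> \<le> 2 * (norm x)^2 + (2 * c^2) * (norm y)^2"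
    using zero_le_power2[of "norm x - \<bar>c\<bar> * norm y"]
    unfolding power2_diff power2_sum power_mult_distrib by simp
  finally show ?thesis .
qed

lemma ctrl_L2_add_scaleR:
  assumes u: "ctrl_L2 T u" and v: "ctrl_L2 T v"
  shows "ctrl_L2 T (\<lambda>t. u t + c *\<^sub>R v t)"
proof -
  have um: "(\<lambda>t. indicator {0..T} t *\<^sub>R u t) \<in> borel_measurable lborel"
    and vm: "(\<lambda>t. indicator {0..T} t *\<^sub>R v t) \<in> borel_measurable lborel"
    using u v unfolding ctrl_L2_def set_borel_measurable_def by auto
  have eq: "(\<lambda>t. indicator {0..T} t *\<^sub>R (u t + c *\<^sub>R v t))
      = (\<lambda>t. indicator {0..T} t *\<^sub>R u t + c *\<^sub>R (indicator {0..T} t *\<^sub>R v t))"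
    by (simp add: fun_eq_iff algebra_simps)
  have meas: "(\<lambda>t. indicator {0..T} t *\<^sub>R (u t + c *\<^sub>R v t)) \<in> borel_measurable lborel"
    unfolding eq using um vm by measurable
  have sq_eq: "(\<lambda>t. indicator {0..T} t *\<^sub>R (norm (u t + c *\<^sub>R v t))^2)
      = (\<lambda>t. (norm (indicator {0..T} t *\<^sub>R (u t + c *\<^sub>R v t)))^2)"
    by (simp add: fun_eq_iff indicator_def)
  have "(\<lambda>t. (norm (indicator {0..T} t *\<^sub>R (u t + c *\<^sub>R v t)))^2) \<in> borel_measurable lborel"
    using meas by measurable
  then have "(\<lambda>t. indicator {0..T} t *\<^sub>R (norm (u t + c *\<^sub>R v t))^2) \<in> borel_measurable lborel"
    unfolding sq_eq .
  then have sq_meas: "set_borel_measurable lborel {0..T} (\<lambda>t. (norm (u t + c *\<^sub>R v t))^2)"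
    unfolding set_borel_measurable_def by simp
  have bound_int: "set_integrable lborel {0..T} (\<lambda>t. 2 * (norm (u t))^2 + (2 * c^2) * (norm (v t))^2)"
    using u v unfolding ctrl_L2_def by (intro set_integral_add(1) set_integrable_mult_right) auto
  have "set_integrable lborel {0..T} (\<lambda>t. (norm (u t + c *\<^sub>R v t))^2)"
    by (rule set_integrable_bound[OF bound_int sq_meas]) (auto intro!: AE_I2 norm_add_scaleR_sq_le)
  then show ?thesis
    using meas unfolding ctrl_L2_def set_borel_measurable_def by blast
qed

lemma ctrl_L2_continuous:
  assumes "continuous_on {0..T} u"
  shows "ctrl_L2 T u"
proof -
  have "integrable lborel (\<lambda>t. indicator {0..T} t *\<^sub>R u t)"
    by (rule borel_integrable_compact) (auto intro: assms)
  moreover have "integrable lborel (\<lambda>t. indicator {0..T} t *\<^sub>R (norm (u t))^2)"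
    by (rule borel_integrable_compact) (auto intro!: continuous_intros assms)
  ultimately show ?thesis
    unfolding ctrl_L2_def set_borel_measurable_def set_integrable_def by auto
qed

lemma ctrl_nsq_nonneg: "ctrl_nsq T u \<ge> 0"
  unfolding ctrl_nsq_def set_lebesgue_integral_def
  by (rule Bochner_Integration.integral_nonneg) (simp add: indicator_def)

lemma ctrl_nsq_scaleR: "ctrl_nsq T (\<lambda>t. c *\<^sub>R u t) = c^2 * ctrl_nsq T u"
  by (simp add: ctrl_nsq_def power_mult_distrib)

lemma ctrl_nsq_parallelogram:
  assumes u: "ctrl_L2 T u" and v: "ctrl_L2 T v"
  shows "ctrl_nsq T (\<lambda>t. u t + s *\<^sub>R v t) + ctrl_nsq T (\<lambda>t. u t - s *\<^sub>R v t)
       = 2 * ctrl_nsq T u + 2 * s^2 * ctrl_nsq T v"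
proof -
  have parallelogram: "(norm (x + s *\<^sub>R y))^2 + (norm (x - s *\<^sub>R y))^2
      = 2 * (norm x)^2 + (2 * s^2) * (norm y)^2" for x y :: "real \<times> real"
    unfolding power2_norm_eq_inner
    by (simp add: inner_add_left inner_add_right algebra_simps power2_eq_square)
  have sq: "set_integrable lborel {0..T} (\<lambda>t. (norm (u t + s *\<^sub>R v t))^2)"
    and sq': "set_integrable lborel {0..T} (\<lambda>t. (norm (u t - s *\<^sub>R v t))^2)"
    using ctrl_L2_add_scaleR[OF u v, of s] ctrl_L2_add_scaleR[OF u v, of "- s"]
    unfolding ctrl_L2_def by auto
  have "ctrl_nsq T (\<lambda>t. u t + s *\<^sub>R v t) + ctrl_nsq T (\<lambda>t. u t - s *\<^sub>R v t)
      = (LINT t:{0..T}|lborel. 2 * (norm (u t))^2 + (2 * s^2) * (norm (v t))^2)"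
    unfolding ctrl_nsq_def parallelogram[symmetric] by (rule set_integral_add(2)[OF sq sq', symmetric])
  also have "\<dots> = 2 * ctrl_nsq T u + 2 * s^2 * ctrl_nsq T v"
    using u v unfolding ctrl_nsq_def ctrl_L2_def by (simp add: set_integral_add(2))
  finally show ?thesis .
qed

lemma ctrl_nsq_cong_AE:
  assumes "ctrl_L2 T u" "ctrl_L2 T v" "AE t in lborel. t \<in> {0..T} \<longrightarrow> u t = v t"
  shows "ctrl_nsq T u = ctrl_nsq T v"
  using assms unfolding ctrl_nsq_def set_lebesgue_integral_def ctrl_L2_def set_integrable_def
  by (intro integral_cong_AE) (auto elim!: AE_mp simp: indicator_def)

section \<open>Weak derivatives\<close>

lemma emeasure_density_pos_part_greaterThan:
  fixes g :: "real \<Rightarrow> real"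
  assumes g: "integrable lborel g"
  shows "emeasure (density lborel (\<lambda>x. ennreal (max 0 (g x)))) {t<..}
       = ennreal (LINT x:{t<..}|lborel. max 0 (g x))"
proof -
  have [measurable]: "g \<in> borel_measurable lborel" using g by auto
  have "emeasure (density lborel (\<lambda>x. ennreal (max 0 (g x)))) {t<..}
      = (\<integral>\<^sup>+x. ennreal (max 0 (g x)) * indicator {t<..} x \<partial>lborel)"
    by (simp add: emeasure_density)
  also have "\<dots> = (\<integral>\<^sup>+x. ennreal (indicator {t<..} x * max 0 (g x)) \<partial>lborel)"
    by (intro nn_integral_cong) (simp add: indicator_def)
  also have "\<dots> = ennreal (LINT x:{t<..}|lborel. max 0 (g x))"
    using integrable_mult_indicator[of "{t<..}" lborel "\<lambda>x. max 0 (g x)"] g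
    unfolding set_lebesgue_integral_def by (subst nn_integral_eq_integral) auto
  finally show ?thesis .
qed

lemma AE_zero_if_set_integrals_atMost_zero:
  fixes f :: "real \<Rightarrow> real"
  assumes f: "integrable lborel f"
    and atMost: "\<And>t. (LINT x:{..t}|lborel. f x) = 0"
    and total: "integral\<^sup>L lborel f = 0"
  shows "AE x in lborel. f x = 0"
proof -
  have [measurable]: "f \<in> borel_measurable lborel" using f by auto
  have greaterThan: "(LINT x:{t<..}|lborel. f x) = 0" for t
  proof -
    have "(\<lambda>x. indicator {t<..} x *\<^sub>R f x) = (\<lambda>x. f x - indicator {..t} x *\<^sub>R f x)"
      by (auto simp: indicator_def fun_eq_iff)
    moreover have "integrable lborel (\<lambda>x. indicator {..t} x *\<^sub>R f x)"
      using f by (intro integrable_mult_indicator) auto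
    ultimately have "(LINT x:{t<..}|lborel. f x) = integral\<^sup>L lborel f - (LINT x:{..t}|lborel. f x)"
      unfolding set_lebesgue_integral_def using f by (simp del: scaleR_conv_of_real)
    then show ?thesis using atMost total by simp
  qed
  have parts: "(LINT x:{t<..}|lborel. max 0 (f x)) = (LINT x:{t<..}|lborel. max 0 (- f x))" for t
  proof -
    have "(\<lambda>x. indicator {t<..} x *\<^sub>R f x)
        = (\<lambda>x. indicator {t<..} x *\<^sub>R max 0 (f x) - indicator {t<..} x *\<^sub>R max 0 (- f x))"
      by (auto simp: indicator_def fun_eq_iff)
    moreover have "integrable lborel (\<lambda>x. indicator {t<..} x *\<^sub>R max 0 (f x))"
      using f by (intro integrable_mult_indicator) auto
    moreover have "integrable lborel (\<lambda>x. indicator {t<..} x *\<^sub>R max 0 (- f x))"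
      using f by (intro integrable_mult_indicator) auto
    ultimately have "(LINT x:{t<..}|lborel. f x)
        = (LINT x:{t<..}|lborel. max 0 (f x)) - (LINT x:{t<..}|lborel. max 0 (- f x))"
      unfolding set_lebesgue_integral_def by (simp del: scaleR_conv_of_real)
    then show ?thesis using greaterThan by simp
  qed
  \<comment> \<open>the positive and negative parts of \<open>f\<close> are densities of the same measure\<close>
  have "density lborel (\<lambda>x. ennreal (max 0 (f x))) = density lborel (\<lambda>x. ennreal (max 0 (- f x)))"
  proof (rule measure_eqI_lessThan)
    fix t
    show "emeasure (density lborel (\<lambda>x. ennreal (max 0 (f x)))) {t<..} < \<infinity>"
      using emeasure_density_pos_part_greaterThan[OF f] by simp
    show "emeasure (density lborel (\<lambda>x. ennreal (max 0 (f x)))) {t<..}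
        = emeasure (density lborel (\<lambda>x. ennreal (max 0 (- f x)))) {t<..}"
      using emeasure_density_pos_part_greaterThan[OF f]
        emeasure_density_pos_part_greaterThan[of "\<lambda>x. - f x"] f parts by simp
  qed auto
  then have "AE x in lborel. ennreal (max 0 (f x)) = ennreal (max 0 (- f x))"
    by (rule sigma_finite_measure.density_unique[OF sigma_finite_lborel, rotated 2]) auto
  then show ?thesis
    by eventually_elim (auto simp: max_def split: if_splits)
qed

lemma AE_zero_if_initial_set_integrals_zero:
  fixes f :: "real \<Rightarrow> real"
  assumes T: "T \<ge> 0" and f: "set_integrable lborel {0..T} f"
    and initial: "\<And>t. t \<in> {0..T} \<Longrightarrow> (LINT s:{0..t}|lborel. f s) = 0"
  shows "AE x in lborel. x \<in> {0..T} \<longrightarrow> f x = 0"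
proof -
  define F where "F = (\<lambda>x. indicator {0..T} x * f x)"
  have restrict: "(LINT x:A|lborel. F x) = (LINT x:A \<inter> {0..T}|lborel. f x)" for A
    unfolding F_def set_lebesgue_integral_def by (simp add: indicator_inter_arith mult.assoc)
  have "(LINT x:{..t}|lborel. F x) = 0" for t
  proof (cases "t < 0")
    case True
    then have "{..t} \<inter> {0..T} = {}" by auto
    then show ?thesis unfolding restrict by (simp add: set_lebesgue_integral_def)
  next
    case False
    then have "{..t} \<inter> {0..T} = {0..min T t}" by auto
    then show ?thesis unfolding restrict using initial[of "min T t"] False T by simp
  qed
  moreover have "integral\<^sup>L lborel F = 0"
    using initial[of T] T unfolding F_def set_lebesgue_integral_def by simp
  moreover have "integrable lborel F"
    using f unfolding F_def set_integrable_def by simp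
  ultimately have "AE x in lborel. F x = 0"
    by (intro AE_zero_if_set_integrals_atMost_zero)
  then show ?thesis by eventually_elim (auto simp: F_def)
qed

lemma weak_deriv_unique_AE:
  assumes T: "T \<ge> 0" and g1: "weak_deriv T u g1" and g2: "weak_deriv T u g2"
  shows "AE t in lborel. t \<in> {0..T} \<longrightarrow> g1 t = g2 t"
proof -
  have int: "set_integrable lborel {0..t} g" if "weak_deriv T u g" "t \<in> {0..T}" for g t
    using that by (auto intro: set_integrable_subset ctrl_L2_set_integrable simp: weak_deriv_def)
  have d_int: "set_integrable lborel {0..T} (\<lambda>t. g1 t - g2 t)"
    using int[OF g1] int[OF g2] T by auto
  have d_initial: "(LINT s:{0..t}|lborel. g1 s - g2 s) = 0" if t: "t \<in> {0..T}" for t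
  proof -
    have "(LINT s:{0..t}|lborel. g1 s) = (LINT s:{0..t}|lborel. g2 s)"
      using g1 g2 t unfolding weak_deriv_def by (metis add_left_cancel)
    then show ?thesis using int[OF g1 t] int[OF g2 t] by simp
  qed
  have component: "AE t in lborel. t \<in> {0..T} \<longrightarrow> p (g1 t - g2 t) = 0"
    if p: "bounded_linear p" for p :: "real \<times> real \<Rightarrow> real"
  proof (rule AE_zero_if_initial_set_integrals_zero[OF T])
    have scale: "p (c *\<^sub>R x) = c * p x" for c x
      using linear.scaleR[OF bounded_linear.linear[OF p]] by simp
    have p_int: "set_integrable lborel A (\<lambda>t. p (d t))"
      and p_integral: "(LINT t:A|lborel. p (d t)) = p (LINT t:A|lborel. d t)"
      if "set_integrable lborel A d" for A and d :: "real \<Rightarrow> real \<times> real"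
      using integrable_bounded_linear[OF p that[unfolded set_integrable_def]]
        integral_bounded_linear[OF p that[unfolded set_integrable_def]]
      unfolding set_integrable_def set_lebesgue_integral_def by (simp_all add: scale)
    show "set_integrable lborel {0..T} (\<lambda>t. p (g1 t - g2 t))"
      by (rule p_int[OF d_int])
    fix t assume t: "t \<in> {0..T}"
    have "set_integrable lborel {0..t} (\<lambda>t. g1 t - g2 t)"
      using int[OF g1 t] int[OF g2 t] by auto
    from p_integral[OF this] show "(LINT s:{0..t}|lborel. p (g1 s - g2 s)) = 0"
      using d_initial[OF t] scale[of 0 0] by simp
  qed
  from component[OF bounded_linear_fst] component[OF bounded_linear_snd]
  show ?thesis by eventually_elim (auto simp: prod_eq_iff)
qed

lemma ctrl_nsq_dt:
  assumes "T \<ge> 0" and g: "weak_deriv T u g"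
  shows "ctrl_nsq T (dt T u) = ctrl_nsq T g"
proof -
  have "weak_deriv T u (dt T u)"
    unfolding dt_def using g by (rule someI[where P = "weak_deriv T u"])
  then show ?thesis
    using assms weak_deriv_unique_AE ctrl_nsq_cong_AE unfolding weak_deriv_def by blast
qed

lemma weak_deriv_add_scaleR:
  assumes u: "weak_deriv T u G" and h: "weak_deriv T h g"
  shows "weak_deriv T (\<lambda>t. u t + c *\<^sub>R h t) (\<lambda>t. G t + c *\<^sub>R g t)"
proof -
  have "u t + c *\<^sub>R h t = (u 0 + c *\<^sub>R h 0) + (LINT s:{0..t}|lborel. G s + c *\<^sub>R g s)"
    if t: "t \<in> {0..T}" for t
  proof -
    have "set_integrable lborel {0..t} G" "set_integrable lborel {0..t} g"
      using u h t by (auto intro: set_integrable_subset ctrl_L2_set_integrable simp: weak_deriv_def)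
    then have "(LINT s:{0..t}|lborel. G s + c *\<^sub>R g s)
        = (LINT s:{0..t}|lborel. G s) + c *\<^sub>R (LINT s:{0..t}|lborel. g s)"
      by (simp only: set_integral_add(2) set_integrable_scaleR_right set_integral_scaleR_right)
    moreover have "u t = u 0 + (LINT s:{0..t}|lborel. G s)" "h t = h 0 + (LINT s:{0..t}|lborel. g s)"
      using u h t unfolding weak_deriv_def by blast+
    ultimately show ?thesis by (simp add: algebra_simps)
  qed
  moreover have "ctrl_L2 T (\<lambda>t. G t + c *\<^sub>R g t)"
    using u h by (intro ctrl_L2_add_scaleR) (auto simp: weak_deriv_def)
  ultimately show ?thesis unfolding weak_deriv_def by blast
qed

lemma H1_nsq_scaleR:
  assumes "T \<ge> 0" and "weak_deriv T h g"
  shows "H1_nsq T (\<lambda>t. c *\<^sub>R h t) = c^2 * (ctrl_nsq T h + ctrl_nsq T g)"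
proof -
  have "weak_deriv T (\<lambda>t. 0) (\<lambda>t. 0)"
    unfolding weak_deriv_def using ctrl_L2_continuous[of T "\<lambda>t. 0"] by auto
  from weak_deriv_add_scaleR[OF this assms(2)]
  have "weak_deriv T (\<lambda>t. c *\<^sub>R h t) (\<lambda>t. c *\<^sub>R g t)" by simp
  then show ?thesis
    unfolding H1_nsq_def using ctrl_nsq_dt[OF assms(1)] by (simp add: ctrl_nsq_scaleR algebra_simps)
qed

lemma H1_add_scaleR:
  assumes u: "H1 T u" and h: "H1 T h"
  shows "H1 T (\<lambda>t. u t + c *\<^sub>R h t)"
proof -
  obtain G g where "weak_deriv T u G" "weak_deriv T h g"
    using u h unfolding H1_def by blast
  then have "weak_deriv T (\<lambda>t. u t + c *\<^sub>R h t) (\<lambda>t. G t + c *\<^sub>R g t)"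
    by (rule weak_deriv_add_scaleR)
  moreover have "ctrl_L2 T (\<lambda>t. u t + c *\<^sub>R h t)"
    using u h unfolding H1_def by (intro ctrl_L2_add_scaleR) auto
  moreover have "continuous_on {0..T} (\<lambda>t. u t + c *\<^sub>R h t)"
    using u h unfolding H1_def by (intro continuous_intros) auto
  ultimately show ?thesis unfolding H1_def by blast
qed

section \<open>The tracking term\<close>

lemma obs_nsq_nonneg: "obs_nsq T \<omega> y \<ge> 0"
  unfolding obs_nsq_def set_lebesgue_integral_def
  by (rule Bochner_Integration.integral_nonneg) (simp add: indicator_def)

lemma obs_L2_diff_sq_integrable:
  assumes y1: "obs_L2 T \<omega> y1" and y2: "obs_L2 T \<omega> y2"
  shows "integrable lborel (\<lambda>z. indicator ({0<..<T} \<times> \<omega>) z * (y1 z - y2 z)^2)"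
proof (rule Bochner_Integration.integrable_bound)
  let ?R = "{0<..<T} \<times> \<omega>"
  have m1: "(\<lambda>z. indicator ?R z *\<^sub>R y1 z) \<in> borel_measurable lborel"
    and m2: "(\<lambda>z. indicator ?R z *\<^sub>R y2 z) \<in> borel_measurable lborel"
    using y1 y2 unfolding obs_L2_def set_borel_measurable_def by blast+
  have "(\<lambda>z. indicator ?R z * (y1 z - y2 z)^2)
      = (\<lambda>z. (indicator ?R z *\<^sub>R y1 z - indicator ?R z *\<^sub>R y2 z)^2)"
    by (auto simp: fun_eq_iff indicator_def)
  then show "(\<lambda>z. indicator ?R z * (y1 z - y2 z)^2) \<in> borel_measurable lborel"
    using m1 m2 by simp
  show "integrable lborel (\<lambda>z. 2 * (indicator ?R z *\<^sub>R (y1 z)^2) + 2 * (indicator ?R z *\<^sub>R (y2 z)^2))"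
    using y1 y2 unfolding obs_L2_def set_integrable_def by auto
  have "(p - q)^2 \<le> 2 * p^2 + 2 * q^2" for p q :: real
    using zero_le_power2[of "p + q"] unfolding power2_diff power2_sum by linarith
  then show "AE z in lborel. norm (indicator ?R z * (y1 z - y2 z)^2)
      \<le> norm (2 * (indicator ?R z *\<^sub>R (y1 z)^2) + 2 * (indicator ?R z *\<^sub>R (y2 z)^2))"
    by (intro AE_I2) (simp add: indicator_def)
qed

lemma obs_nsq_second_difference:
  assumes a: "obs_L2 T \<omega> a" and b: "obs_L2 T \<omega> b" and c: "obs_L2 T \<omega> c"
    and p: "obs_L2 T \<omega> p" and q: "obs_L2 T \<omega> q" and y: "obs_L2 T \<omega> y"
    and mid: "AE z in lborel. z \<in> {0<..<T} \<times> \<omega> \<longrightarrow> a z + b z = 2 * c z"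
    and diff: "AE z in lborel. z \<in> {0<..<T} \<times> \<omega> \<longrightarrow> a z - b z = p z - q z"
  shows "obs_nsq T \<omega> (\<lambda>z. a z - y z) + obs_nsq T \<omega> (\<lambda>z. b z - y z)
       - 2 * obs_nsq T \<omega> (\<lambda>z. c z - y z) = 1/2 * obs_nsq T \<omega> (\<lambda>z. p z - q z)"
proof -
  let ?R = "{0<..<T} \<times> \<omega>"
  let ?I = "\<lambda>y1 y2 z. indicator ?R z * (y1 z - y2 z)^2"
  have nsq: "obs_nsq T \<omega> (\<lambda>z. y1 z - y2 z) = integral\<^sup>L lborel (?I y1 y2)" for y1 y2
    by (simp add: obs_nsq_def set_lebesgue_integral_def)
  note int = obs_L2_diff_sq_integrable
  have "obs_nsq T \<omega> (\<lambda>z. a z - y z) + obs_nsq T \<omega> (\<lambda>z. b z - y z) - 2 * obs_nsq T \<omega> (\<lambda>z. c z - y z)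
      = integral\<^sup>L lborel (\<lambda>z. ?I a y z + ?I b y z - 2 * ?I c y z)"
    unfolding nsq using int[OF a y] int[OF b y] int[OF c y] by simp
  also have "\<dots> = integral\<^sup>L lborel (\<lambda>z. 1/2 * ?I p q z)"
  proof (rule integral_cong_AE)
    show "(\<lambda>z. ?I a y z + ?I b y z - 2 * ?I c y z) \<in> borel_measurable lborel"
      "(\<lambda>z. 1/2 * ?I p q z) \<in> borel_measurable lborel"
      using int[OF a y] int[OF b y] int[OF c y] int[OF p q] by auto
    from mid diff show "AE z in lborel. ?I a y z + ?I b y z - 2 * ?I c y z = 1/2 * ?I p q z"
    proof eventually_elim
      case (elim z)
      show ?case
      proof (cases "z \<in> ?R")
        case True
        then have c_mid: "c z = (a z + b z) / 2" and pq: "p z - q z = a z - b z"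
          using elim by auto
        have "(a z - y z)^2 + (b z - y z)^2 - 2 * (c z - y z)^2 = 1/2 * (p z - q z)^2"
          unfolding c_mid pq by (simp add: power2_eq_square field_simps)
        with True show ?thesis by simp
      qed simp
    qed
  qed
  also have "\<dots> = 1/2 * obs_nsq T \<omega> (\<lambda>z. p z - q z)"
    unfolding nsq by simp
  finally show ?thesis .
qed

lemma obs_nsq_lin_part_le_op_norm:
  fixes S :: "(real \<Rightarrow> real \<times> real) \<Rightarrow> (real \<times> 'a::euclidean_space \<Rightarrow> real)"
  assumes bounded: "\<exists>C. \<forall>u. ctrl_L2 T u \<longrightarrow> obs_nsq T \<omega> (lin_part S u) \<le> C * ctrl_nsq T u"
    and w: "ctrl_L2 T w"
  shows "obs_nsq T \<omega> (lin_part S w) \<le> (op_norm T \<omega> (lin_part S))^2 * ctrl_nsq T w"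
proof -
  obtain C where C: "\<And>u. ctrl_L2 T u \<Longrightarrow> obs_nsq T \<omega> (lin_part S u) \<le> C * ctrl_nsq T u"
    using bounded by blast
  define X where "X = {u. ctrl_L2 T u \<and> ctrl_nsq T u \<noteq> 0}"
  define ratio where "ratio = (\<lambda>u. sqrt (obs_nsq T \<omega> (lin_part S u)) / sqrt (ctrl_nsq T u))"
  show ?thesis
  proof (cases "ctrl_nsq T w = 0")
    case True
    then show ?thesis using C[OF w] obs_nsq_nonneg[of T \<omega> "lin_part S w"] by simp
  next
    case False
    then have w_pos: "ctrl_nsq T w > 0" using ctrl_nsq_nonneg[of T w] by simp
    have "ratio u \<le> sqrt \<bar>C\<bar>" if "u \<in> X" for u
    proof -
      have u_pos: "ctrl_nsq T u > 0" using that ctrl_nsq_nonneg[of T u] unfolding X_def by auto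
      have "obs_nsq T \<omega> (lin_part S u) \<le> C * ctrl_nsq T u" using C that unfolding X_def by blast
      also have "\<dots> \<le> \<bar>C\<bar> * ctrl_nsq T u" using u_pos by (intro mult_right_mono) auto
      finally have "obs_nsq T \<omega> (lin_part S u) / ctrl_nsq T u \<le> \<bar>C\<bar>"
        using u_pos by (simp add: divide_le_eq)
      then show ?thesis
        unfolding ratio_def real_sqrt_divide[symmetric] by (rule real_sqrt_le_mono)
    qed
    then have "bdd_above (ratio ` X)" by (intro bdd_aboveI2) blast
    moreover have "w \<in> X" using w False unfolding X_def by blast
    ultimately have "ratio w \<le> op_norm T \<omega> (lin_part S)"
      unfolding op_norm_def X_def ratio_def by (rule cSUP_upper[rotated])
    then have "sqrt (obs_nsq T \<omega> (lin_part S w)) \<le> op_norm T \<omega> (lin_part S) * sqrt (ctrl_nsq T w)"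
      using w_pos unfolding ratio_def by (simp add: divide_le_eq)
    then have "(sqrt (obs_nsq T \<omega> (lin_part S w)))^2 \<le> (op_norm T \<omega> (lin_part S) * sqrt (ctrl_nsq T w))^2"
      by (rule power_mono) (simp add: obs_nsq_nonneg)
    then show ?thesis
      using obs_nsq_nonneg[of T \<omega> "lin_part S w"] w_pos by (simp add: power_mult_distrib)
  qed
qed

section \<open>The sine bump\<close>

lemma set_integral_FTC_real:
  fixes F f :: "real \<Rightarrow> real"
  assumes "a \<le> b"
    and "\<And>x. a \<le> x \<Longrightarrow> x \<le> b \<Longrightarrow> (F has_real_derivative f x) (at x)"
    and "continuous_on {a..b} f"
  shows "(LINT x:{a..b}|lborel. f x) = F b - F a"
  unfolding set_lebesgue_integral_def
  using assms by (intro integral_FTC_atLeastAtMost)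
    (auto simp: has_real_derivative_iff_has_vector_derivative intro: has_vector_derivative_at_within)

lemma set_integral_sin_sq_half_period:
  assumes L: "L > 0"
  shows "(LINT x:{a..a+L}|lborel. (sin (pi * (x - a) / L))^2) = L / 2"
proof -
  have "(LINT x:{a..a+L}|lborel. (sin (pi * (x - a) / L))^2)
      = ((a + L - a) / 2 - L / (4 * pi) * sin (2 * (pi * (a + L - a) / L)))
        - ((a - a) / 2 - L / (4 * pi) * sin (2 * (pi * (a - a) / L)))"
  proof (rule set_integral_FTC_real)
    fix x
    have "((\<lambda>x. (x - a) / 2 - L / (4 * pi) * sin (2 * (pi * (x - a) / L))) has_real_derivative
        1 / 2 - L / (4 * pi) * (cos (2 * (pi * (x - a) / L)) * (2 * (pi / L)))) (at x)"
      using L by (auto intro!: derivative_eq_intros simp: field_simps)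
    moreover have "1 / 2 - L / (4 * pi) * (cos (2 * (pi * (x - a) / L)) * (2 * (pi / L)))
        = (sin (pi * (x - a) / L))^2"
      using L cos_double_sin[of "pi * (x - a) / L"] by (simp add: field_simps)
    ultimately show "((\<lambda>x. (x - a) / 2 - L / (4 * pi) * sin (2 * (pi * (x - a) / L))) has_real_derivative
        (sin (pi * (x - a) / L))^2) (at x)" by simp
  qed (use L in \<open>auto intro!: continuous_intros\<close>)
  also have "\<dots> = L / 2" using L by simp
  finally show ?thesis .
qed

lemma set_integral_cos_sq_half_period:
  assumes L: "L > 0"
  shows "(LINT x:{a..a+L}|lborel. (cos (pi * (x - a) / L))^2) = L / 2"
proof -
  have int: "set_integrable lborel {a..a+L} f" if "continuous_on {a..a+L} f" for f :: "real \<Rightarrow> real"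
    unfolding set_integrable_def using that by (intro borel_integrable_compact) auto
  have "(LINT x:{a..a+L}|lborel. 1::real) = (a + L) - a"
    by (rule set_integral_FTC_real) (use L in \<open>auto intro!: derivative_eq_intros\<close>)
  moreover have "(LINT x:{a..a+L}|lborel. (cos (pi * (x - a) / L))^2)
      = (LINT x:{a..a+L}|lborel. 1::real) - (LINT x:{a..a+L}|lborel. (sin (pi * (x - a) / L))^2)"
    unfolding cos_squared_eq
    by (rule set_integral_diff(2)) (use L in \<open>auto intro!: int continuous_intros\<close>)
  ultimately show ?thesis using set_integral_sin_sq_half_period[OF L] by simp
qed

text \<open>The half sine wave \<open>sin (\<pi> (t - a) / L)\<close> on \<open>[a, a + L]\<close>, extended by zero; clamping \<open>t\<close>
  into \<open>[a, a + L]\<close> makes the extension continuous.\<close>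

definition sine_bump :: "real \<Rightarrow> real \<Rightarrow> real \<Rightarrow> real" where
  "sine_bump a L t = sin (pi * (max a (min (a + L) t) - a) / L)"

definition sine_bump_deriv :: "real \<Rightarrow> real \<Rightarrow> real \<Rightarrow> real" where
  "sine_bump_deriv a L t = indicator {a..a+L} t * (pi / L * cos (pi * (t - a) / L))"

lemma continuous_on_sine_bump: "L > 0 \<Longrightarrow> continuous_on S (sine_bump a L)"
  unfolding sine_bump_def by (intro continuous_intros) auto

lemma abs_sine_bump_le_1: "\<bar>sine_bump a L t\<bar> \<le> 1"
  unfolding sine_bump_def by simp

lemma sine_bump_inside: "t \<in> {a..a+L} \<Longrightarrow> sine_bump a L t = sin (pi * (t - a) / L)"
  unfolding sine_bump_def by simp

lemma sine_bump_outside: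
  assumes "L > 0" "t \<notin> {a..a+L}"
  shows "sine_bump a L t = 0"
proof (cases "t < a")
  case False
  then have "max a (min (a + L) t) - a = L" using assms by auto
  then show ?thesis unfolding sine_bump_def using assms by simp
qed (simp add: sine_bump_def)

lemma integrable_sine_bump_deriv_power:
  assumes "L > 0" "k > 0"
  shows "integrable lborel (\<lambda>t. (sine_bump_deriv a L t)^k)"
proof -
  have "integrable lborel (\<lambda>t. indicator {a..a+L} t *\<^sub>R (pi / L * cos (pi * (t - a) / L))^k)"
    by (rule borel_integrable_compact) (use assms in \<open>auto intro!: continuous_intros\<close>)
  moreover have "(\<lambda>t. (sine_bump_deriv a L t)^k)
      = (\<lambda>t. indicator {a..a+L} t *\<^sub>R (pi / L * cos (pi * (t - a) / L))^k)"
    using assms by (simp add: sine_bump_deriv_def indicator_def fun_eq_iff)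
  ultimately show ?thesis by simp
qed

lemma sine_bump_eq_initial_integral:
  assumes L: "L > 0" and a: "a \<ge> 0" and t: "t \<ge> 0"
  shows "sine_bump a L t = (LINT s:{0..t}|lborel. sine_bump_deriv a L s)"
proof (cases "t < a")
  case True
  then have "(\<lambda>s. indicator {0..t} s *\<^sub>R sine_bump_deriv a L s) = (\<lambda>s. 0)"
    by (auto simp: sine_bump_deriv_def indicator_def fun_eq_iff)
  then show ?thesis
    using True by (simp add: set_lebesgue_integral_def sine_bump_def)
next
  case False
  let ?m = "min t (a + L)"
  have "(LINT s:{0..t}|lborel. sine_bump_deriv a L s)
      = (LINT s:{a..?m}|lborel. pi / L * cos (pi * (s - a) / L))"
    unfolding set_lebesgue_integral_def
    by (intro arg_cong[where f = "integral\<^sup>L lborel"])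
      (use False a in \<open>auto simp: sine_bump_deriv_def indicator_def fun_eq_iff\<close>)
  also have "\<dots> = sin (pi * (?m - a) / L) - sin (pi * (a - a) / L)"
    by (rule set_integral_FTC_real)
      (use False L in \<open>auto intro!: derivative_eq_intros continuous_intros simp: field_simps\<close>)
  also have "\<dots> = sine_bump a L t"
    using False L by (simp add: sine_bump_def min_def max_def)
  finally show ?thesis ..
qed

lemma set_integral_sine_bump_sq:
  assumes L: "L > 0" and "a \<ge> 0" "a + L \<le> T"
  shows "(LINT t:{0..T}|lborel. (sine_bump a L t)^2) = L / 2"
proof -
  have "(LINT t:{0..T}|lborel. (sine_bump a L t)^2)
      = (LINT t:{a..a+L}|lborel. (sin (pi * (t - a) / L))^2)"
    unfolding set_lebesgue_integral_def
    by (intro arg_cong[where f = "integral\<^sup>L lborel"])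
      (use assms in \<open>auto simp: fun_eq_iff indicator_def sine_bump_inside sine_bump_outside\<close>)
  then show ?thesis using set_integral_sin_sq_half_period[OF L] by simp
qed

lemma set_integral_sine_bump_deriv_sq:
  assumes L: "L > 0" and "a \<ge> 0" "a + L \<le> T"
  shows "(LINT t:{0..T}|lborel. (sine_bump_deriv a L t)^2) = pi^2 / (2 * L)"
proof -
  have "(LINT t:{0..T}|lborel. (sine_bump_deriv a L t)^2)
      = (LINT t:{a..a+L}|lborel. (pi / L)^2 * (cos (pi * (t - a) / L))^2)"
    unfolding set_lebesgue_integral_def
    by (intro arg_cong[where f = "integral\<^sup>L lborel"])
      (use assms in \<open>auto simp: fun_eq_iff indicator_def sine_bump_deriv_def power_mult_distrib power_divide\<close>)
  also have "\<dots> = (pi / L)^2 * (L / 2)"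
    using set_integral_cos_sq_half_period[OF L] by simp
  finally show ?thesis using L by (simp add: power2_eq_square)
qed

text \<open>With \<open>\<sigma>\<close> the sign of \<open>u\<^sub>1 u\<^sub>2\<close> on the support of the bump \<open>\<phi>\<close>, the quadratic term
  \<open>-\<sigma> s\<^sup>2 \<phi>\<^sup>2\<close> of \<open>(u\<^sub>1 + s \<phi>) (u\<^sub>2 - \<sigma> s \<phi>)\<close> pulls the product towards zero.\<close>

definition bump_direction :: "real \<Rightarrow> real \<Rightarrow> real \<Rightarrow> real \<Rightarrow> real \<times> real" where
  "bump_direction a L \<sigma> t = sine_bump a L t *\<^sub>R (1::real, - \<sigma>)"

definition bump_direction_deriv :: "real \<Rightarrow> real \<Rightarrow> real \<Rightarrow> real \<Rightarrow> real \<times> real" where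
  "bump_direction_deriv a L \<sigma> t = sine_bump_deriv a L t *\<^sub>R (1::real, - \<sigma>)"

lemma norm_scaleR_sign_pair_sq:
  fixes \<sigma> :: real
  assumes "\<sigma>^2 = 1"
  shows "(norm (c *\<^sub>R (1::real, - \<sigma>)))^2 = 2 * c^2"
proof -
  have "(norm (c *\<^sub>R (1::real, - \<sigma>)))^2 = c^2 + (c * \<sigma>)^2"
    by (simp add: norm_Pair)
  then show ?thesis using assms by (simp add: power_mult_distrib)
qed

lemma continuous_on_bump_direction: "L > 0 \<Longrightarrow> continuous_on S (bump_direction a L \<sigma>)"
  unfolding bump_direction_def by (intro continuous_intros continuous_on_sine_bump)

lemma weak_deriv_bump_direction:
  assumes L: "L > 0" and a: "a \<ge> 0" and \<sigma>: "\<sigma>^2 = 1"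
  shows "weak_deriv T (bump_direction a L \<sigma>) (bump_direction_deriv a L \<sigma>)"
  unfolding weak_deriv_def
proof
  have [measurable]: "sine_bump_deriv a L \<in> borel_measurable lborel"
    using borel_measurable_integrable[OF integrable_sine_bump_deriv_power[OF L, of 1]] by simp
  have "(\<lambda>t. indicator {0..T} t *\<^sub>R bump_direction_deriv a L \<sigma> t) \<in> borel_measurable lborel"
    unfolding bump_direction_deriv_def by measurable
  moreover have "integrable lborel (\<lambda>t. indicator {0..T} t *\<^sub>R (2 * (sine_bump_deriv a L t)^2))"
    using integrable_sine_bump_deriv_power[OF L, of 2] by (intro integrable_mult_indicator) auto
  ultimately show "ctrl_L2 T (bump_direction_deriv a L \<sigma>)"
    unfolding ctrl_L2_def set_borel_measurable_def set_integrable_def bump_direction_deriv_def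
      norm_scaleR_sign_pair_sq[OF \<sigma>] by simp
  show "\<forall>t\<in>{0..T}. bump_direction a L \<sigma> t
      = bump_direction a L \<sigma> 0 + (LINT s:{0..t}|lborel. bump_direction_deriv a L \<sigma> s)"
  proof
    fix t assume t: "t \<in> {0..T}"
    have "sine_bump a L t = (LINT s:{0..t}|lborel. sine_bump_deriv a L s)"
      using t sine_bump_eq_initial_integral[OF L a] by simp
    then have "(LINT s:{0..t}|lborel. bump_direction_deriv a L \<sigma> s) = bump_direction a L \<sigma> t"
      unfolding bump_direction_deriv_def bump_direction_def
      by (simp only:) (rule set_integral_scaleR_left,
          auto intro: integrable_sine_bump_deriv_power[OF L, of 1, simplified])
    moreover have "bump_direction a L \<sigma> 0 = 0"
      using a by (simp add: bump_direction_def sine_bump_def zero_prod_def)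
    ultimately show "bump_direction a L \<sigma> t
        = bump_direction a L \<sigma> 0 + (LINT s:{0..t}|lborel. bump_direction_deriv a L \<sigma> s)"
      by simp
  qed
qed

lemma H1_bump_direction:
  assumes "L > 0" "a \<ge> 0" "\<sigma>^2 = 1"
  shows "H1 T (bump_direction a L \<sigma>)"
  unfolding H1_def using assms
  by (meson ctrl_L2_continuous continuous_on_bump_direction weak_deriv_bump_direction)

lemma ctrl_nsq_bump_direction:
  assumes "L > 0" "a \<ge> 0" "a + L \<le> T" "\<sigma>^2 = 1"
  shows "ctrl_nsq T (bump_direction a L \<sigma>) = L"
  using set_integral_sine_bump_sq[of L a T] assms
  unfolding ctrl_nsq_def bump_direction_def norm_scaleR_sign_pair_sq[OF assms(4)] by simp

lemma ctrl_nsq_bump_direction_deriv: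
  assumes "L > 0" "a \<ge> 0" "a + L \<le> T" "\<sigma>^2 = 1"
  shows "ctrl_nsq T (bump_direction_deriv a L \<sigma>) = pi^2 / L"
  using set_integral_sine_bump_deriv_sq[of L a T] assms
  unfolding ctrl_nsq_def bump_direction_deriv_def norm_scaleR_sign_pair_sq[OF assms(4)] by simp

section \<open>The product penalty\<close>

lemma abs_product_second_difference:
  fixes x1 x2 \<phi> s \<sigma> m K :: real
  assumes \<sigma>: "\<sigma>^2 = 1" and pos: "\<sigma> * (x1 * x2) \<ge> m" and K: "\<bar>x2 - \<sigma> * x1\<bar> \<le> K"
    and \<phi>: "\<bar>\<phi>\<bar> \<le> 1" and s: "\<bar>s\<bar> * K + s^2 < m"
  shows "\<bar>(x1 + s * \<phi>) * (x2 - s * \<sigma> * \<phi>)\<bar> + \<bar>(x1 - s * \<phi>) * (x2 + s * \<sigma> * \<phi>)\<bar>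
       = 2 * \<bar>x1 * x2\<bar> - 2 * s^2 * \<phi>^2"
proof -
  have abs_\<sigma>: "\<bar>\<sigma>\<bar> = 1" using \<sigma> by (auto simp: power2_eq_1_iff)
  have abs_eq: "\<bar>y\<bar> = \<sigma> * y" if "\<sigma> * y > 0" for y
    using that abs_\<sigma> by (auto simp: abs_if split: if_splits)
  have sign: "\<sigma> * ((x1 + c * \<phi>) * (x2 - c * \<sigma> * \<phi>)) > 0" if c: "\<bar>c\<bar> = \<bar>s\<bar>" for c
  proof -
    have "\<sigma> * ((x1 + c * \<phi>) * (x2 - c * \<sigma> * \<phi>))
        = \<sigma> * (x1 * x2) + c * \<phi> * \<sigma> * (x2 - \<sigma> * x1) - c^2 * \<phi>^2"
      using \<sigma> by (simp add: algebra_simps power2_eq_square)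
    moreover have "\<bar>\<phi>\<bar> * \<bar>x2 - \<sigma> * x1\<bar> \<le> K"
      using mult_mono[OF \<phi> K] by simp
    then have "\<bar>c * \<phi> * \<sigma> * (x2 - \<sigma> * x1)\<bar> \<le> \<bar>s\<bar> * K"
      using c abs_\<sigma> by (simp add: abs_mult mult_left_mono mult.assoc)
    moreover have "c^2 * \<phi>^2 \<le> s^2"
    proof -
      have "\<phi>^2 \<le> 1" using power_mono[OF \<phi> abs_ge_zero, of 2] by simp
      moreover have "c^2 = s^2" using c by (metis power2_abs)
      ultimately show ?thesis by (metis mult_left_le zero_le_power2)
    qed
    ultimately show ?thesis using pos s by linarith
  qed
  have "\<bar>(x1 + s * \<phi>) * (x2 - s * \<sigma> * \<phi>)\<bar> + \<bar>(x1 - s * \<phi>) * (x2 + s * \<sigma> * \<phi>)\<bar>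
      = \<sigma> * ((x1 + s * \<phi>) * (x2 - s * \<sigma> * \<phi>)) + \<sigma> * ((x1 - s * \<phi>) * (x2 + s * \<sigma> * \<phi>))"
    using abs_eq[OF sign[of s]] abs_eq[OF sign[of "- s"]] by simp
  also have "\<dots> = 2 * (\<sigma> * (x1 * x2)) - 2 * s^2 * \<phi>^2"
    using \<sigma> by (simp add: algebra_simps power2_eq_square)
  also have "\<sigma> * (x1 * x2) = \<bar>x1 * x2\<bar>"
  proof -
    have "0 \<le> \<bar>s\<bar> * K" using K by simp
    then have "m > 0" using s zero_le_power2[of s] by linarith
    then show ?thesis using abs_eq[of "x1 * x2"] pos by simp
  qed
  finally show ?thesis .
qed

definition product_penalty :: "real \<Rightarrow> (real \<Rightarrow> real \<times> real) \<Rightarrow> real" where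
  "product_penalty T u = (LINT t:{0..T}|lborel. \<bar>fst (u t) * snd (u t)\<bar>)"

lemma J_beta_eq:
  "J_beta T \<omega> S yd \<alpha> \<epsilon> \<beta> u = 1/2 * obs_nsq T \<omega> (\<lambda>z. S u z - yd z) + \<alpha>/2 * ctrl_nsq T u
     + \<epsilon>/2 * ctrl_nsq T (dt T u) + \<beta> * product_penalty T u"
  unfolding J_beta_def product_penalty_def ..

lemma product_penalty_bump_second_difference:
  fixes u :: "real \<Rightarrow> real \<times> real"
  assumes L: "L > 0" and a: "a \<ge> 0" "a + L \<le> T" and \<sigma>: "\<sigma>^2 = 1"
    and u: "continuous_on {0..T} u"
    and pos: "\<And>t. t \<in> {a..a+L} \<Longrightarrow> \<sigma> * (fst (u t) * snd (u t)) \<ge> m"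
    and K: "\<And>t. t \<in> {a..a+L} \<Longrightarrow> \<bar>snd (u t) - \<sigma> * fst (u t)\<bar> \<le> K"
    and s: "\<bar>s\<bar> * K + s^2 < m"
  shows "product_penalty T (\<lambda>t. u t + s *\<^sub>R bump_direction a L \<sigma> t)
       + product_penalty T (\<lambda>t. u t - s *\<^sub>R bump_direction a L \<sigma> t)
       = 2 * product_penalty T u - s^2 * L"
proof -
  define P :: "(real \<Rightarrow> real \<times> real) \<Rightarrow> real \<Rightarrow> real"
    where "P = (\<lambda>v t. \<bar>fst (v t) * snd (v t)\<bar>)"
  define vp where "vp = (\<lambda>t. u t + s *\<^sub>R bump_direction a L \<sigma> t)"
  define vm where "vm = (\<lambda>t. u t - s *\<^sub>R bump_direction a L \<sigma> t)"
  have int: "set_integrable lborel {0..T} f" if "continuous_on {0..T} f" for f :: "real \<Rightarrow> real"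
    unfolding set_integrable_def using that by (intro borel_integrable_compact) auto
  have cont: "continuous_on {0..T} (bump_direction a L \<sigma>)" "continuous_on {0..T} (sine_bump a L)"
    using L by (auto intro: continuous_on_bump_direction continuous_on_sine_bump)
  have pointwise: "P vp t + P vm t = 2 * \<bar>fst (u t) * snd (u t)\<bar> - (2 * s^2) * (sine_bump a L t)^2" for t
  proof (cases "t \<in> {a..a+L}")
    case True
    then show ?thesis
      using abs_product_second_difference[OF \<sigma> pos[OF True] K[OF True] abs_sine_bump_le_1 s]
      by (simp add: P_def vp_def vm_def bump_direction_def algebra_simps)
  next
    case False
    then show ?thesis
      using sine_bump_outside[OF L False] by (simp add: P_def vp_def vm_def bump_direction_def)
  qed
  have "product_penalty T vp + product_penalty T vm = (LINT t:{0..T}|lborel. P vp t + P vm t)"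
    unfolding product_penalty_def P_def vp_def vm_def
    by (rule set_integral_add(2)[symmetric]) (auto intro!: int continuous_intros u cont)
  also have "\<dots> = (LINT t:{0..T}|lborel. 2 * \<bar>fst (u t) * snd (u t)\<bar>)
      - (LINT t:{0..T}|lborel. (2 * s^2) * (sine_bump a L t)^2)"
    unfolding pointwise by (rule set_integral_diff(2)) (auto intro!: int continuous_intros u cont)
  also have "\<dots> = 2 * product_penalty T u - s^2 * L"
    using set_integral_sine_bump_sq[OF L a] by (simp add: product_penalty_def)
  finally show ?thesis unfolding vp_def vm_def .
qed

lemma product_sign_definite:
  fixes u :: "real \<Rightarrow> real \<times> real"
  assumes u: "continuous_on {c..d} u" and cd: "c \<le> d"
    and nonzero: "\<And>t. t \<in> {c..d} \<Longrightarrow> fst (u t) * snd (u t) \<noteq> 0"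
  obtains \<sigma> m K where "\<sigma>^2 = 1" "m > 0"
    "\<And>t. t \<in> {c..d} \<Longrightarrow> \<sigma> * (fst (u t) * snd (u t)) \<ge> m"
    "\<And>t. t \<in> {c..d} \<Longrightarrow> \<bar>snd (u t) - \<sigma> * fst (u t)\<bar> \<le> K"
proof -
  define P where "P = (\<lambda>t. fst (u t) * snd (u t))"
  define \<sigma> :: real where "\<sigma> = sgn (P c)"
  have "P c \<noteq> 0" using nonzero[of c] cd unfolding P_def by simp
  then have \<sigma>: "\<sigma>^2 = 1" "\<sigma> * P c > 0"
    unfolding \<sigma>_def by (auto simp: sgn_if)
  have cont: "continuous_on {c..d} (\<lambda>t. \<sigma> * P t)"
    unfolding P_def by (intro continuous_intros u)
  have pos: "\<sigma> * P t > 0" if t: "t \<in> {c..d}" for t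
  proof (rule ccontr)
    assume "\<not> \<sigma> * P t > 0"
    then obtain x where "x \<in> {c..t}" "\<sigma> * P x = 0"
      using IVT2'[of "\<lambda>x. \<sigma> * P x" t 0 c] \<sigma>(2) t continuous_on_subset[OF cont] by fastforce
    then show False using nonzero[of x] \<sigma>(1) t unfolding P_def by auto
  qed
  have nonempty: "{c..d} \<noteq> {}" using cd by simp
  obtain x0 where x0: "x0 \<in> {c..d}" "\<forall>t\<in>{c..d}. \<sigma> * P x0 \<le> \<sigma> * P t"
    using continuous_attains_inf[OF compact_Icc nonempty cont] by blast
  have "continuous_on {c..d} (\<lambda>t. \<bar>snd (u t) - \<sigma> * fst (u t)\<bar>)"
    by (intro continuous_intros u)
  then obtain x1 where x1: "\<forall>t\<in>{c..d}. \<bar>snd (u t) - \<sigma> * fst (u t)\<bar> \<le> \<bar>snd (u x1) - \<sigma> * fst (u x1)\<bar>"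
    using continuous_attains_sup[OF compact_Icc nonempty] by blast
  show ?thesis
  proof (rule that[OF \<sigma>(1)])
    show "\<sigma> * P x0 > 0" by (rule pos[OF x0(1)])
    show "\<sigma> * (fst (u t) * snd (u t)) \<ge> \<sigma> * P x0" if "t \<in> {c..d}" for t
      using x0(2) that unfolding P_def by blast
  qed (use x1 in blast)
qed

lemma sign_definite_window:
  fixes u :: "real \<Rightarrow> real \<times> real"
  assumes u: "continuous_on {0..T} u" and L: "0 < L" "L < b - a"
    and sub: "{a<..<b} \<subseteq> {t\<in>{0..T}. fst (u t) * snd (u t) \<noteq> 0}"
  obtains c \<sigma> m K where "0 \<le> c" "c + L \<le> T" "\<sigma>^2 = 1" "m > 0"
    "\<And>t. t \<in> {c..c+L} \<Longrightarrow> \<sigma> * (fst (u t) * snd (u t)) \<ge> m"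
    "\<And>t. t \<in> {c..c+L} \<Longrightarrow> \<bar>snd (u t) - \<sigma> * fst (u t)\<bar> \<le> K"
proof -
  define c where "c = (a + b - L) / 2"
  have window: "t \<in> {0..T} \<and> fst (u t) * snd (u t) \<noteq> 0" if "t \<in> {c..c+L}" for t
    using sub that L unfolding c_def by (auto simp: subset_iff field_simps)
  then have c: "0 \<le> c" "c + L \<le> T" using window[of c] window[of "c + L"] L by auto
  have "continuous_on {c..c+L} u"
    using u c by (auto elim: continuous_on_subset)
  with L window obtain \<sigma> m K where "\<sigma>^2 = 1" "m > 0"
    "\<And>t. t \<in> {c..c+L} \<Longrightarrow> \<sigma> * (fst (u t) * snd (u t)) \<ge> m"
    "\<And>t. t \<in> {c..c+L} \<Longrightarrow> \<bar>snd (u t) - \<sigma> * fst (u t)\<bar> \<le> K"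
    by (elim product_sign_definite) auto
  with c that show ?thesis by blast
qed

section \<open>Second differences of the cost along a bump\<close>

lemma tracking_second_difference_le:
  fixes S :: "(real \<Rightarrow> real \<times> real) \<Rightarrow> (real \<times> 'a::euclidean_space \<Rightarrow> real)"
  assumes S_maps: "\<And>u. ctrl_L2 T u \<Longrightarrow> obs_L2 T \<omega> (S u)"
    and S_affine: "\<And>u v a. ctrl_L2 T u \<Longrightarrow> ctrl_L2 T v \<Longrightarrow>
          AE z in lborel. z \<in> {0<..<T} \<times> \<omega> \<longrightarrow>
            S (\<lambda>t. a *\<^sub>R u t + (1 - a) *\<^sub>R v t) z = a * S u z + (1 - a) * S v z"
    and S_bounded: "\<exists>C. \<forall>u. ctrl_L2 T u \<longrightarrow> obs_nsq T \<omega> (lin_part S u) \<le> C * ctrl_nsq T u"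
    and yd: "obs_L2 T \<omega> yd" and u: "ctrl_L2 T u" and h: "ctrl_L2 T h"
  shows "obs_nsq T \<omega> (\<lambda>z. S (\<lambda>t. u t + s *\<^sub>R h t) z - yd z)
       + obs_nsq T \<omega> (\<lambda>z. S (\<lambda>t. u t - s *\<^sub>R h t) z - yd z)
       - 2 * obs_nsq T \<omega> (\<lambda>z. S u z - yd z)
       \<le> 2 * (s^2 * (op_norm T \<omega> (lin_part S))^2 * ctrl_nsq T h)"
proof -
  define vp where "vp = (\<lambda>t. u t + s *\<^sub>R h t)"
  define vm where "vm = (\<lambda>t. u t - s *\<^sub>R h t)"
  define w where "w = (\<lambda>t. (2 * s) *\<^sub>R h t)"
  have zero: "ctrl_L2 T (\<lambda>t. 0)" by (rule ctrl_L2_continuous) simp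
  have vp: "ctrl_L2 T vp" and vm: "ctrl_L2 T vm" and w: "ctrl_L2 T w"
    unfolding vp_def vm_def w_def
    using ctrl_L2_add_scaleR[OF u h, of s] ctrl_L2_add_scaleR[OF u h, of "- s"]
      ctrl_L2_add_scaleR[OF zero h, of "2 * s"]
    by auto
  have "(\<lambda>t. (1/2) *\<^sub>R vp t + (1 - 1/2) *\<^sub>R vm t) = u"
    unfolding vp_def vm_def by (simp add: fun_eq_iff prod_eq_iff algebra_simps)
  with S_affine[OF vp vm, of "1/2"]
  have mid: "AE z in lborel. z \<in> {0<..<T} \<times> \<omega> \<longrightarrow> S vp z + S vm z = 2 * S u z"
    by (auto elim!: AE_mp)
  have halves: "(\<lambda>t. (1/2) *\<^sub>R vp t + (1 - 1/2) *\<^sub>R (0::real \<times> real))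
      = (\<lambda>t. (1/2) *\<^sub>R vm t + (1 - 1/2) *\<^sub>R w t)"
    unfolding vp_def vm_def w_def by (simp add: fun_eq_iff prod_eq_iff algebra_simps)
  have diff: "AE z in lborel. z \<in> {0<..<T} \<times> \<omega> \<longrightarrow> S vp z - S vm z = S w z - S (\<lambda>t. 0) z"
    using S_affine[OF vp zero, of "1/2"] S_affine[OF vm w, of "1/2"] unfolding halves
    by eventually_elim (auto simp: field_simps)
  have "obs_nsq T \<omega> (\<lambda>z. S vp z - yd z) + obs_nsq T \<omega> (\<lambda>z. S vm z - yd z)
      - 2 * obs_nsq T \<omega> (\<lambda>z. S u z - yd z) = 1/2 * obs_nsq T \<omega> (lin_part S w)"
    unfolding lin_part_def
    using S_maps[OF vp] S_maps[OF vm] S_maps[OF u] S_maps[OF w] S_maps[OF zero] yd mid diff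
    by (rule obs_nsq_second_difference)
  also have "\<dots> \<le> 1/2 * ((op_norm T \<omega> (lin_part S))^2 * ctrl_nsq T w)"
    using obs_nsq_lin_part_le_op_norm[OF S_bounded w] by simp
  also have "\<dots> = 2 * (s^2 * (op_norm T \<omega> (lin_part S))^2 * ctrl_nsq T h)"
    unfolding w_def ctrl_nsq_scaleR by (simp add: power_mult_distrib)
  finally show ?thesis unfolding vp_def vm_def .
qed

lemma J_beta_second_difference_le:
  fixes S :: "(real \<Rightarrow> real \<times> real) \<Rightarrow> (real \<times> 'a::euclidean_space \<Rightarrow> real)"
  assumes T: "T \<ge> 0"
    and S_maps: "\<And>u. ctrl_L2 T u \<Longrightarrow> obs_L2 T \<omega> (S u)"
    and S_affine: "\<And>u v a. ctrl_L2 T u \<Longrightarrow> ctrl_L2 T v \<Longrightarrow>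
          AE z in lborel. z \<in> {0<..<T} \<times> \<omega> \<longrightarrow>
            S (\<lambda>t. a *\<^sub>R u t + (1 - a) *\<^sub>R v t) z = a * S u z + (1 - a) * S v z"
    and S_bounded: "\<exists>C. \<forall>u. ctrl_L2 T u \<longrightarrow> obs_nsq T \<omega> (lin_part S u) \<le> C * ctrl_nsq T u"
    and yd: "obs_L2 T \<omega> yd"
    and u: "ctrl_L2 T u" "weak_deriv T u G" and h: "ctrl_L2 T h" "weak_deriv T h g"
  shows "J_beta T \<omega> S yd \<alpha> \<epsilon> \<beta> (\<lambda>t. u t + s *\<^sub>R h t) + J_beta T \<omega> S yd \<alpha> \<epsilon> \<beta> (\<lambda>t. u t - s *\<^sub>R h t)
       - 2 * J_beta T \<omega> S yd \<alpha> \<epsilon> \<beta> u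
       \<le> s^2 * (op_norm T \<omega> (lin_part S))^2 * ctrl_nsq T h + \<alpha> * s^2 * ctrl_nsq T h
         + \<epsilon> * s^2 * ctrl_nsq T g
         + \<beta> * (product_penalty T (\<lambda>t. u t + s *\<^sub>R h t) + product_penalty T (\<lambda>t. u t - s *\<^sub>R h t)
           - 2 * product_penalty T u)"
proof -
  have G: "ctrl_L2 T G" and g: "ctrl_L2 T g" using u h unfolding weak_deriv_def by auto
  have "ctrl_nsq T (dt T (\<lambda>t. u t + c *\<^sub>R h t)) = ctrl_nsq T (\<lambda>t. G t + c *\<^sub>R g t)" for c
    using ctrl_nsq_dt[OF T weak_deriv_add_scaleR[OF u(2) h(2)]] .
  from this[of s] this[of "- s"]
  have deriv: "ctrl_nsq T (dt T (\<lambda>t. u t + s *\<^sub>R h t)) + ctrl_nsq T (dt T (\<lambda>t. u t - s *\<^sub>R h t))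
      - 2 * ctrl_nsq T (dt T u) = 2 * s^2 * ctrl_nsq T g"
    using ctrl_nsq_parallelogram[OF G g, of s] ctrl_nsq_dt[OF T u(2)] by simp
  have ctrl: "ctrl_nsq T (\<lambda>t. u t + s *\<^sub>R h t) + ctrl_nsq T (\<lambda>t. u t - s *\<^sub>R h t)
      - 2 * ctrl_nsq T u = 2 * s^2 * ctrl_nsq T h"
    using ctrl_nsq_parallelogram[OF u(1) h(1), of s] by simp
  let ?vp = "\<lambda>t. u t + s *\<^sub>R h t" and ?vm = "\<lambda>t. u t - s *\<^sub>R h t"
  let ?O = "\<lambda>v. obs_nsq T \<omega> (\<lambda>z. S v z - yd z)"
  have tracking: "?O ?vp + ?O ?vm - 2 * ?O u \<le> 2 * (s^2 * (op_norm T \<omega> (lin_part S))^2 * ctrl_nsq T h)"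
    using S_maps S_affine S_bounded yd u(1) h(1) by (rule tracking_second_difference_le)
  have "J_beta T \<omega> S yd \<alpha> \<epsilon> \<beta> ?vp + J_beta T \<omega> S yd \<alpha> \<epsilon> \<beta> ?vm - 2 * J_beta T \<omega> S yd \<alpha> \<epsilon> \<beta> u
      = 1/2 * (?O ?vp + ?O ?vm - 2 * ?O u)
        + \<alpha>/2 * (ctrl_nsq T ?vp + ctrl_nsq T ?vm - 2 * ctrl_nsq T u)
        + \<epsilon>/2 * (ctrl_nsq T (dt T ?vp) + ctrl_nsq T (dt T ?vm) - 2 * ctrl_nsq T (dt T u))
        + \<beta> * (product_penalty T ?vp + product_penalty T ?vm - 2 * product_penalty T u)"
    unfolding J_beta_eq by (simp add: algebra_simps)
  also have "\<dots> = 1/2 * (?O ?vp + ?O ?vm - 2 * ?O u) + \<alpha> * s^2 * ctrl_nsq T h + \<epsilon> * s^2 * ctrl_nsq T g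
        + \<beta> * (product_penalty T ?vp + product_penalty T ?vm - 2 * product_penalty T u)"
    unfolding ctrl deriv by simp
  also have "\<dots> \<le> s^2 * (op_norm T \<omega> (lin_part S))^2 * ctrl_nsq T h + \<alpha> * s^2 * ctrl_nsq T h
        + \<epsilon> * s^2 * ctrl_nsq T g
        + \<beta> * (product_penalty T ?vp + product_penalty T ?vm - 2 * product_penalty T u)"
    using tracking by (intro add_right_mono) simp
  finally show ?thesis .
qed

lemma J_beta_bump_second_difference_le:
  fixes S :: "(real \<Rightarrow> real \<times> real) \<Rightarrow> (real \<times> 'a::euclidean_space \<Rightarrow> real)"
  assumes T: "T \<ge> 0"
    and S_maps: "\<And>u. ctrl_L2 T u \<Longrightarrow> obs_L2 T \<omega> (S u)"
    and S_affine: "\<And>u v a. ctrl_L2 T u \<Longrightarrow> ctrl_L2 T v \<Longrightarrow>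
          AE z in lborel. z \<in> {0<..<T} \<times> \<omega> \<longrightarrow>
            S (\<lambda>t. a *\<^sub>R u t + (1 - a) *\<^sub>R v t) z = a * S u z + (1 - a) * S v z"
    and S_bounded: "\<exists>C. \<forall>u. ctrl_L2 T u \<longrightarrow> obs_nsq T \<omega> (lin_part S u) \<le> C * ctrl_nsq T u"
    and yd: "obs_L2 T \<omega> yd" and u: "H1 T u"
    and L: "L > 0" and c: "c \<ge> 0" "c + L \<le> T" and \<sigma>: "\<sigma>^2 = 1"
    and pos: "\<And>t. t \<in> {c..c+L} \<Longrightarrow> \<sigma> * (fst (u t) * snd (u t)) \<ge> m"
    and K: "\<And>t. t \<in> {c..c+L} \<Longrightarrow> \<bar>snd (u t) - \<sigma> * fst (u t)\<bar> \<le> K"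
    and s: "\<bar>s\<bar> * K + s^2 < m"
  shows "J_beta T \<omega> S yd \<alpha> \<epsilon> \<beta> (\<lambda>t. u t + s *\<^sub>R bump_direction c L \<sigma> t)
       + J_beta T \<omega> S yd \<alpha> \<epsilon> \<beta> (\<lambda>t. u t - s *\<^sub>R bump_direction c L \<sigma> t)
       - 2 * J_beta T \<omega> S yd \<alpha> \<epsilon> \<beta> u
       \<le> s^2 * L * ((op_norm T \<omega> (lin_part S))^2 + \<alpha> - \<beta>) + \<epsilon> * s^2 * (pi^2 / L)"
proof -
  let ?h = "bump_direction c L \<sigma>"
  obtain G where G: "weak_deriv T u G" using u unfolding H1_def by blast
  have "ctrl_L2 T u" "continuous_on {0..T} u" using u unfolding H1_def by auto
  moreover have "ctrl_L2 T ?h"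
    using H1_bump_direction[OF L c(1) \<sigma>] unfolding H1_def by blast
  ultimately have "J_beta T \<omega> S yd \<alpha> \<epsilon> \<beta> (\<lambda>t. u t + s *\<^sub>R ?h t)
       + J_beta T \<omega> S yd \<alpha> \<epsilon> \<beta> (\<lambda>t. u t - s *\<^sub>R ?h t) - 2 * J_beta T \<omega> S yd \<alpha> \<epsilon> \<beta> u
       \<le> s^2 * (op_norm T \<omega> (lin_part S))^2 * ctrl_nsq T ?h + \<alpha> * s^2 * ctrl_nsq T ?h
         + \<epsilon> * s^2 * ctrl_nsq T (bump_direction_deriv c L \<sigma>)
         + \<beta> * (product_penalty T (\<lambda>t. u t + s *\<^sub>R ?h t) + product_penalty T (\<lambda>t. u t - s *\<^sub>R ?h t)
           - 2 * product_penalty T u)"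
    using S_maps S_affine S_bounded yd G weak_deriv_bump_direction[OF L c(1) \<sigma>]
    by (intro J_beta_second_difference_le[OF T]) auto
  also have "\<dots> = s^2 * (op_norm T \<omega> (lin_part S))^2 * L + \<alpha> * s^2 * L + \<epsilon> * s^2 * (pi^2 / L)
         + \<beta> * (2 * product_penalty T u - s^2 * L - 2 * product_penalty T u)"
    using product_penalty_bump_second_difference[OF L c \<sigma> \<open>continuous_on {0..T} u\<close> pos K s]
    by (simp add: ctrl_nsq_bump_direction[OF L c \<sigma>] ctrl_nsq_bump_direction_deriv[OF L c \<sigma>])
  also have "\<dots> = s^2 * L * ((op_norm T \<omega> (lin_part S))^2 + \<alpha> - \<beta>) + \<epsilon> * s^2 * (pi^2 / L)"
    by (simp add: algebra_simps)
  finally show ?thesis .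
qed

lemma J_beta_second_difference_nonneg_at_local_min:
  assumes T: "T \<ge> 0" and u: "H1 T u" and h: "H1 T h" "weak_deriv T h g"
    and locmin: "\<And>v. H1 T v \<Longrightarrow> H1_nsq T (\<lambda>t. v t - u t) < r^2 \<Longrightarrow>
          J_beta T \<omega> S yd \<alpha> \<epsilon> \<beta> u \<le> J_beta T \<omega> S yd \<alpha> \<epsilon> \<beta> v"
    and s: "s^2 * (ctrl_nsq T h + ctrl_nsq T g) < r^2"
  shows "0 \<le> J_beta T \<omega> S yd \<alpha> \<epsilon> \<beta> (\<lambda>t. u t + s *\<^sub>R h t)
       + J_beta T \<omega> S yd \<alpha> \<epsilon> \<beta> (\<lambda>t. u t - s *\<^sub>R h t) - 2 * J_beta T \<omega> S yd \<alpha> \<epsilon> \<beta> u"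
proof -
  have "J_beta T \<omega> S yd \<alpha> \<epsilon> \<beta> u \<le> J_beta T \<omega> S yd \<alpha> \<epsilon> \<beta> (\<lambda>t. u t + e *\<^sub>R h t)"
    if "e^2 = s^2" for e
  proof (rule locmin)
    show "H1 T (\<lambda>t. u t + e *\<^sub>R h t)" by (rule H1_add_scaleR[OF u h(1)])
    show "H1_nsq T (\<lambda>t. (u t + e *\<^sub>R h t) - u t) < r^2"
      using H1_nsq_scaleR[OF T h(2), of e] that s by simp
  qed
  from this[of s] this[of "- s"] show ?thesis by simp
qed

lemma small_step_exists:
  fixes K m N r :: real
  assumes "m > 0" "r > 0"
  shows "\<exists>s>0. s * K + s^2 < m \<and> s^2 * N < r^2"
proof -
  have "\<forall>\<^sub>F s in at_right 0. s * K + s^2 < m"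
    using assms by (intro order_tendstoD(2)[of _ 0]) (auto intro!: tendsto_eq_intros)
  moreover have "\<forall>\<^sub>F s in at_right 0. s^2 * N < r^2"
    using assms by (intro order_tendstoD(2)[of _ 0]) (auto intro!: tendsto_eq_intros)
  moreover have "\<forall>\<^sub>F s in at_right (0::real). s > 0"
    by (simp add: eventually_at_right_less)
  ultimately have "\<forall>\<^sub>F s in at_right (0::real). s > 0 \<and> s * K + s^2 < m \<and> s^2 * N < r^2"
    by eventually_elim blast
  from eventually_happens'[OF trivial_limit_at_right_real this] show ?thesis by auto
qed

theorem theorem3p2:
  fixes T \<alpha> \<epsilon> \<beta> :: real
    and \<Omega> \<omega> :: "'a::euclidean_space set"
    and S :: "(real \<Rightarrow> real \<times> real) \<Rightarrow> (real \<times> 'a \<Rightarrow> real)"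
    and yd :: "real \<times> 'a \<Rightarrow> real"
    and ubar :: "real \<Rightarrow> real \<times> real"
  assumes T: "T > 0"
    and \<Omega>: "open \<Omega>" "connected \<Omega>" "bounded \<Omega>"
    and \<omega>: "\<omega> \<subseteq> \<Omega>" "\<omega> \<in> sets borel"
    and S_maps: "\<And>u. ctrl_L2 T u \<Longrightarrow> obs_L2 T \<omega> (S u)"
    and S_affine: "\<And>u v a. ctrl_L2 T u \<Longrightarrow> ctrl_L2 T v \<Longrightarrow>
          AE z in lborel. z \<in> {0<..<T} \<times> \<omega> \<longrightarrow>
            S (\<lambda>t. a *\<^sub>R u t + (1 - a) *\<^sub>R v t) z = a * S u z + (1 - a) * S v z"
    and S_bounded: "\<exists>C. \<forall>u. ctrl_L2 T u \<longrightarrow>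
          obs_nsq T \<omega> (lin_part S u) \<le> C * ctrl_nsq T u"
    and yd: "obs_L2 T \<omega> yd"
    and \<alpha>: "\<alpha> > 0" and \<epsilon>: "\<epsilon> > 0"
    and \<beta>: "\<beta> > (op_norm T \<omega> (lin_part S))^2 + \<alpha> + pi^2"
    and ubar_H1: "H1 T ubar"
    and ubar_locmin: "\<exists>r>0. \<forall>v. H1 T v \<and> H1_nsq T (\<lambda>t. v t - ubar t) < r^2 \<longrightarrow>
          J_beta T \<omega> S yd \<alpha> \<epsilon> \<beta> ubar \<le> J_beta T \<omega> S yd \<alpha> \<epsilon> \<beta> v"
  shows "\<forall>a b. {a<..<b} \<subseteq> {t\<in>{0..T}. fst (ubar t) * snd (ubar t) \<noteq> 0} \<longrightarrow>
           b - a \<le> sqrt \<epsilon>"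
proof (intro allI impI)
  fix a b
  assume sub: "{a<..<b} \<subseteq> {t\<in>{0..T}. fst (ubar t) * snd (ubar t) \<noteq> 0}"
  define L where "L = sqrt \<epsilon>"
  have L: "L > 0" "\<epsilon> = L^2" unfolding L_def using \<epsilon> by auto
  show "b - a \<le> sqrt \<epsilon>"
  proof (rule ccontr)
    assume "\<not> b - a \<le> sqrt \<epsilon>"
    then have len: "L < b - a" unfolding L_def by simp
    have cont: "continuous_on {0..T} ubar" using ubar_H1 unfolding H1_def by blast
    obtain c \<sigma> m K where c: "0 \<le> c" "c + L \<le> T" and \<sigma>: "\<sigma>^2 = 1" and m: "m > 0"
      and pos: "\<And>t. t \<in> {c..c+L} \<Longrightarrow> \<sigma> * (fst (ubar t) * snd (ubar t)) \<ge> m"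
      and K: "\<And>t. t \<in> {c..c+L} \<Longrightarrow> \<bar>snd (ubar t) - \<sigma> * fst (ubar t)\<bar> \<le> K"
      using sign_definite_window[OF cont L(1) len sub] by blast
    obtain r where r: "r > 0" and locmin: "\<And>v. H1 T v \<Longrightarrow> H1_nsq T (\<lambda>t. v t - ubar t) < r^2 \<Longrightarrow>
        J_beta T \<omega> S yd \<alpha> \<epsilon> \<beta> ubar \<le> J_beta T \<omega> S yd \<alpha> \<epsilon> \<beta> v"
      using ubar_locmin by blast
    obtain s where s: "s > 0" "s * K + s^2 < m" "s^2 * (L + pi^2 / L) < r^2"
      using small_step_exists[OF m r] by blast
    let ?h = "bump_direction c L \<sigma>"
    have "0 \<le> J_beta T \<omega> S yd \<alpha> \<epsilon> \<beta> (\<lambda>t. ubar t + s *\<^sub>R ?h t)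
        + J_beta T \<omega> S yd \<alpha> \<epsilon> \<beta> (\<lambda>t. ubar t - s *\<^sub>R ?h t) - 2 * J_beta T \<omega> S yd \<alpha> \<epsilon> \<beta> ubar"
      using T ubar_H1 H1_bump_direction[OF L(1) c(1) \<sigma>] weak_deriv_bump_direction[OF L(1) c(1) \<sigma>]
        locmin s(3) ctrl_nsq_bump_direction[OF L(1) c \<sigma>] ctrl_nsq_bump_direction_deriv[OF L(1) c \<sigma>]
      by (intro J_beta_second_difference_nonneg_at_local_min) auto
    also have "\<dots> \<le> s^2 * L * ((op_norm T \<omega> (lin_part S))^2 + \<alpha> - \<beta>) + \<epsilon> * s^2 * (pi^2 / L)"
      using T s(1,2) pos K
      by (intro J_beta_bump_second_difference_le S_maps S_affine S_bounded yd ubar_H1 L(1) c \<sigma>) auto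
    also have "\<dots> = s^2 * L * ((op_norm T \<omega> (lin_part S))^2 + \<alpha> + pi^2 - \<beta>)"
      using L by (simp add: power2_eq_square field_simps)
    also have "\<dots> < 0"
      using \<beta> s(1) L(1) by (intro mult_pos_neg) auto
    finally show False by simp
  qed
qed

end
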